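(* Let $\varsigma$ and $\omega$ be regular axially symmetric functions on the unit sphere $S^2$ (functions of $\theta\in[0,\pi]$) such that $$\mathcal M=\int_0^\pi\left(|\partial_\theta\varsigma|^2+4\varsigma+\frac{|\partial_\theta\omega|^2}{\eta^2}\right)\sin\theta\,d\theta,\qquad \eta=e^{\varsigma}\sin^2\theta,$$ is finite, and assume $\partial_\theta\omega=0$ at $\theta=0$ and $\theta=\pi$. Then $$\mathcal M\ge 8\big(\ln(2|J|)+1\big),\qquad\text{where } J=\tfrac18\big(\omega(\pi)-\omega(0)\big).$$ *)

theory Defs
  imports "HOL-Analysis.Analysis"
begin

text \<open>A regular axially symmetric function on the unit sphere, viewed as a function of
  the polar angle, is smooth (all iterated derivatives exist) at every point of the
  closed interval [0, pi].\<close>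
definition regular_axisym :: "(real \<Rightarrow> real) \<Rightarrow> bool" where
  "regular_axisym f \<longleftrightarrow> (\<forall>k::nat. \<forall>x\<in>{0..pi}. ((deriv ^^ k) f) differentiable (at x))"

definition eta_fun :: "(real \<Rightarrow> real) \<Rightarrow> real \<Rightarrow> real" where
  "eta_fun s \<theta> = exp (s \<theta>) * (sin \<theta>)^2"

definition mass_integrand :: "(real \<Rightarrow> real) \<Rightarrow> (real \<Rightarrow> real) \<Rightarrow> real \<Rightarrow> real" where
  "mass_integrand s w \<theta> =
     ((deriv s \<theta>)^2 + 4 * s \<theta> + (deriv w \<theta>)^2 / (eta_fun s \<theta>)^2) * sin \<theta>"

definition mass_functional :: "(real \<Rightarrow> real) \<Rightarrow> (real \<Rightarrow> real) \<Rightarrow> real" where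
  "mass_functional s w = integral {0..pi} (mass_integrand s w)"

end

theory Submission
  imports Defs "HOL-Real_Asymp.Real_Asymp"
begin

text \<open>Write \<open>A\<close> for the total of the weight \<open>e\<^sup>2\<^sup>\<sigma> sin\<^sup>3 \<theta>\<close> over \<open>[0, \<pi>]\<close>.
  Cauchy-Schwarz against this weight bounds the \<open>\<omega>\<close>-part of the mass from below by
  \<open>(\<omega>(\<pi>) - \<omega>(0))\<^sup>2 / A\<close>, and the \<open>\<sigma>\<close>-part satisfies the sharp inequality
  \<open>\<integral> (\<sigma>'\<^sup>2 + 4\<sigma>) sin \<theta> \<ge> 4 ln A - 8 ln 2 + 4\<close>, with equality for the extreme Kerr
  profile \<open>\<sigma> = -ln (1 + cos\<^sup>2 \<theta>)\<close>; minimising \<open>4 ln A + D\<^sup>2 / A\<close> over \<open>A\<close> gives the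
  claim. The sharp inequality is proved by calibration: a function vanishing at both poles,
  built from \<open>\<sigma>\<close>, the normalised cumulative weight and the cumulative weight of extreme
  Kerr, has a derivative which, added to the energy density, dominates \<open>4 ln A\<close> times the
  normalised weight pointwise (a completed square plus Gibbs' inequality).\<close>

lemma regular_axisym_has_real_derivative:
  assumes "regular_axisym f" and "x \<in> {0..pi}"
  shows "(f has_real_derivative deriv f x) (at x)"
proof -
  have "((deriv ^^ 0) f) differentiable (at x)"
    using assms unfolding regular_axisym_def by blast
  then show ?thesis
    by (simp add: DERIV_deriv_iff_real_differentiable)
qed

lemma continuous_on_regular_axisym:
  assumes "regular_axisym f"
  shows "continuous_on {0..pi} f"
  using regular_axisym_has_real_derivative[OF assms]
  by (intro continuous_at_imp_continuous_on ballI DERIV_isCont)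

lemma continuous_on_deriv_regular_axisym:
  assumes "regular_axisym f"
  shows "continuous_on {0..pi} (deriv f)"
proof -
  have "((deriv ^^ 1) f) differentiable (at x)" if "x \<in> {0..pi}" for x
    using assms that unfolding regular_axisym_def by blast
  then show ?thesis
    by (intro continuous_at_imp_continuous_on ballI differentiable_imp_continuous_within) auto
qed

lemma continuous_on_x_ln_x: "continuous_on {0..} (\<lambda>x::real. x * ln x)"
proof -
  have "continuous (at x within {0..}) (\<lambda>x::real. x * ln x)" if "x \<ge> 0" for x
  proof (cases "x = 0")
    case True
    have "((\<lambda>x::real. x * ln x) \<longlongrightarrow> 0) (at_right 0)"
      by real_asymp
    with True show ?thesis
      by (simp add: continuous_within at_within_Ici_at_right)
  next
    case False
    with that have "isCont (\<lambda>x::real. x * ln x) x"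
      by (auto intro!: continuous_intros)
    then show ?thesis
      by (simp add: continuous_at_imp_continuous_within)
  qed
  then show ?thesis
    by (simp add: continuous_on_eq_continuous_within)
qed

text \<open>A factor dominated by a multiple of \<open>b\<close> tames the logarithmic singularity of \<open>ln b\<close>
  at the zeros of \<open>b\<close>, since \<open>\<bar>a ln b\<bar> \<le> C \<bar>b ln b\<bar>\<close> and \<open>b ln b \<rightarrow> 0\<close>.\<close>
lemma continuous_on_mult_ln_dominated:
  fixes a b :: "'a::t2_space \<Rightarrow> real"
  assumes ca: "continuous_on S a" and cb: "continuous_on S b"
    and dominated: "\<And>x. x \<in> S \<Longrightarrow> 0 \<le> a x \<and> a x \<le> C * b x"
    and b_nonneg: "\<And>x. x \<in> S \<Longrightarrow> 0 \<le> b x"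
  shows "continuous_on S (\<lambda>x. a x * ln (b x))"
proof -
  have b_ln_b: "continuous_on S (\<lambda>y. b y * ln (b y))"
    using continuous_on_compose2[OF continuous_on_x_ln_x cb] b_nonneg by force
  have "continuous (at x within S) (\<lambda>x. a x * ln (b x))" if x: "x \<in> S" for x
  proof (cases "b x = 0")
    case False
    with b_nonneg[OF x] have "b x > 0" by simp
    then have "continuous (at x within S) (\<lambda>x. ln (b x))"
      using cb x by (auto intro!: continuous_intros simp: continuous_on_eq_continuous_within)
    moreover have "continuous (at x within S) a"
      using ca x continuous_on_eq_continuous_within by blast
    ultimately show ?thesis
      by (intro continuous_mult)
  next
    case True
    have C: "C \<ge> 0" if "y \<in> S" "b y > 0" for y
      using dominated[OF that(1)] that(2) by (smt (verit) mult_neg_pos)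
    have bound: "norm (a y * ln (b y)) \<le> \<bar>C\<bar> * \<bar>b y * ln (b y)\<bar>" if y: "y \<in> S" for y
    proof (cases "b y = 0")
      case False
      with b_nonneg[OF y] have "b y > 0" by simp
      have "norm (a y * ln (b y)) = a y * \<bar>ln (b y)\<bar>"
        using dominated[OF y] by (simp add: abs_mult)
      also have "\<dots> \<le> C * b y * \<bar>ln (b y)\<bar>"
        using dominated[OF y] by (intro mult_right_mono) auto
      also have "\<dots> = \<bar>C\<bar> * \<bar>b y * ln (b y)\<bar>"
        using \<open>b y > 0\<close> C[OF y \<open>b y > 0\<close>] by (simp add: abs_mult)
      finally show ?thesis .
    qed simp
    have "((\<lambda>y. b y * ln (b y)) \<longlongrightarrow> b x * ln (b x)) (at x within S)"
      using b_ln_b x by (simp add: continuous_on_def)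
    with True have "((\<lambda>y. b y * ln (b y)) \<longlongrightarrow> 0) (at x within S)"
      by simp
    then have "((\<lambda>y. \<bar>C\<bar> * \<bar>b y * ln (b y)\<bar>) \<longlongrightarrow> 0) (at x within S)"
      by (auto intro: tendsto_eq_intros)
    then have "((\<lambda>y. a y * ln (b y)) \<longlongrightarrow> 0) (at x within S)"
      by (rule Lim_null_comparison[rotated]) (use bound in \<open>auto simp: eventually_at_filter\<close>)
    moreover have "a x = 0"
      using dominated[OF x] True by simp
    ultimately show ?thesis
      using True by (simp add: continuous_within)
  qed
  then show ?thesis
    by (simp add: continuous_on_eq_continuous_within)
qed

lemma mult_ln_div_le:
  fixes p q :: real
  assumes "0 < p" and "0 < q"
  shows "p * ln (q / p) \<le> q - p"
proof -
  have "p * ln (q / p) \<le> p * (q / p - 1)"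
    using assms by (intro mult_left_mono ln_le_minus_one) simp_all
  also have "\<dots> = q - p"
    using assms by (simp add: field_simps)
  finally show ?thesis .
qed

lemma one_add_power2_pos: "0 < 1 + (x::real)^2"
  by (simp add: add_pos_nonneg)

lemma one_add_power2_neq_0: "1 + (x::real)^2 \<noteq> 0"
  using one_add_power2_pos[of x] by simp

text \<open>Cumulative weight of the extreme Kerr profile \<open>\<sigma> = -ln (1 + cos\<^sup>2 \<theta>)\<close>, whose weight
  density \<open>sin\<^sup>3 \<theta> / (1 + cos\<^sup>2 \<theta>)\<^sup>2\<close> has total mass \<open>1\<close>.\<close>
definition kerr_cdf :: "real \<Rightarrow> real" where
  "kerr_cdf t = (1 - cos t)^2 / (2 * (1 + (cos t)^2))"

definition kerr_density :: "real \<Rightarrow> real" where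
  "kerr_density t = sin t ^ 3 / (1 + (cos t)^2)^2"

lemma kerr_cdf_has_real_derivative: "(kerr_cdf has_real_derivative kerr_density t) (at t)"
proof -
  obtain d where d: "1 + (cos t)^2 = d" by simp
  have "d \<noteq> 0"
    using one_add_power2_pos[of "cos t"] d by simp
  show ?thesis
    unfolding kerr_cdf_def[abs_def] kerr_density_def
    apply (rule derivative_eq_intros refl)+
    apply (simp_all only: d)
    using \<open>d \<noteq> 0\<close> apply simp
    apply (simp add: field_simps \<open>d \<noteq> 0\<close>)
    using sin_cos_squared_add[of t] d by algebra
qed

lemma kerr_cdf_0 [simp]: "kerr_cdf 0 = 0"
  and kerr_cdf_pi [simp]: "kerr_cdf pi = 1"
  by (simp_all add: kerr_cdf_def)

lemma one_minus_kerr_cdf: "1 - kerr_cdf t = (1 + cos t)^2 / (2 * (1 + (cos t)^2))"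
  using one_add_power2_pos[of "cos t"]
  by (simp add: kerr_cdf_def field_simps power2_eq_square)

lemma kerr_cdf_nonneg: "0 \<le> kerr_cdf t"
  and kerr_cdf_le_1: "kerr_cdf t \<le> 1"
proof -
  show "0 \<le> kerr_cdf t"
    using one_add_power2_pos[of "cos t"] by (simp add: kerr_cdf_def)
  have "0 \<le> 1 - kerr_cdf t"
    using one_add_power2_pos[of "cos t"] by (simp add: one_minus_kerr_cdf)
  then show "kerr_cdf t \<le> 1" by simp
qed

lemma kerr_cdf_strict_bounds:
  assumes "t \<in> {0<..<pi}"
  shows "0 < kerr_cdf t" "kerr_cdf t < 1"
proof -
  have "-1 < cos t" "cos t < 1"
    using assms cos_monotone_0_pi[of 0 t] cos_monotone_0_pi[of t pi] by auto
  then show "0 < kerr_cdf t"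
    using one_add_power2_pos[of "cos t"] by (simp add: kerr_cdf_def)
  have "0 < 1 - kerr_cdf t"
    using \<open>-1 < cos t\<close> one_add_power2_pos[of "cos t"] by (simp add: one_minus_kerr_cdf)
  then show "kerr_cdf t < 1" by simp
qed

lemma kerr_cdf_mult_one_minus:
  "kerr_cdf t * (1 - kerr_cdf t) = sin t ^ 4 / (4 * (1 + (cos t)^2)^2)"
proof -
  have "(1 - cos t)^2 * (1 + cos t)^2 = (1 - (cos t)^2)^2"
    by algebra
  also have "\<dots> = sin t ^ 4"
    by (simp add: sin_squared_eq[symmetric])
  finally have numerator: "(1 - cos t)^2 * (1 + cos t)^2 = sin t ^ 4" .
  have "kerr_cdf t * (1 - kerr_cdf t)
      = ((1 - cos t)^2 * (1 + cos t)^2) / (2 * (1 + (cos t)^2))^2"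
    unfolding one_minus_kerr_cdf unfolding kerr_cdf_def
    by (simp add: times_divide_times_eq power2_eq_square)
  also have "\<dots> = sin t ^ 4 / (4 * (1 + (cos t)^2)^2)"
    unfolding numerator by (simp add: power2_eq_square algebra_simps)
  finally show ?thesis .
qed

lemma kerr_density_div_cdf_variance:
  assumes "sin t \<noteq> 0"
  shows "kerr_density t / (kerr_cdf t * (1 - kerr_cdf t)) = 4 / sin t"
proof -
  obtain d where d: "1 + (cos t)^2 = d" by simp
  with one_add_power2_pos[of "cos t"] have "d \<noteq> 0" by simp
  with assms show ?thesis
    unfolding kerr_cdf_mult_one_minus kerr_density_def d by (simp add: field_simps eval_nat_numeral)
qed

lemma has_integral_sin_cube:
  fixes a b :: real
  assumes "a \<le> b"
  shows "((\<lambda>t. sin t ^ 3) has_integral ((cos a - cos a ^ 3 / 3) - (cos b - cos b ^ 3 / 3))) {a..b}"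
proof -
  have "((\<lambda>t. sin t ^ 3) has_integral
          ((cos b ^ 3 / 3 - cos b) - (cos a ^ 3 / 3 - cos a))) {a..b}"
  proof (rule fundamental_theorem_of_calculus[OF assms])
    fix t
    have "((\<lambda>t. cos t ^ 3 / 3 - cos t) has_real_derivative sin t ^ 3) (at t)"
      apply (auto intro!: derivative_eq_intros simp: power2_eq_square power3_eq_cube)
      using sin_cos_squared_add3[of t] by algebra
    then show "((\<lambda>t. cos t ^ 3 / 3 - cos t) has_vector_derivative sin t ^ 3) (at t within {a..b})"
      by (simp add: has_real_derivative_iff_has_vector_derivative[symmetric]
          has_field_derivative_at_within)
  qed
  then show ?thesis
    by (simp add: algebra_simps)
qed

lemma integral_sin_cube_from_0:
  fixes x :: real
  assumes "0 \<le> x"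
  shows "integral {0..x} (\<lambda>t. sin t ^ 3) = (1 - cos x)^2 * (2 + cos x) / 3"
  using integral_unique[OF has_integral_sin_cube[OF assms]]
  by (simp add: power2_eq_square power3_eq_cube algebra_simps)

lemma integral_sin_cube_to_pi:
  fixes x :: real
  assumes "x \<le> pi"
  shows "integral {x..pi} (\<lambda>t. sin t ^ 3) = (1 + cos x)^2 * (2 - cos x) / 3"
  using integral_unique[OF has_integral_sin_cube[OF assms]]
  by (simp add: power2_eq_square power3_eq_cube algebra_simps)

lemma cubic_le_kerr_profile:
  fixes c :: real
  assumes "c \<le> 1"
  shows "(1 - c)^2 * (2 + c) / 3 \<le> 4 * ((1 - c)^2 / (2 * (1 + c^2)))"
proof -
  have "6 - (2 + c) * (1 + c^2) = (1 - c) * ((c + 3/2)^2 + 7/4)"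
    by (simp add: power2_eq_square algebra_simps)
  also have "\<dots> \<ge> 0"
    using assms by (intro mult_nonneg_nonneg) auto
  finally have "(1 - c)^2 * ((2 + c) * (1 + c^2)) \<le> (1 - c)^2 * 6"
    by (intro mult_left_mono) auto
  then show ?thesis
    using one_add_power2_pos[of c] by (simp add: field_simps)
qed

lemma sin_cube_cap_le_kerr_cdf:
  "(1 - cos x)^2 * (2 + cos x) / 3 \<le> 4 * kerr_cdf x"
  "(1 + cos x)^2 * (2 - cos x) / 3 \<le> 4 * (1 - kerr_cdf x)"
proof -
  show "(1 - cos x)^2 * (2 + cos x) / 3 \<le> 4 * kerr_cdf x"
    unfolding kerr_cdf_def by (rule cubic_le_kerr_profile) simp
  show "(1 + cos x)^2 * (2 - cos x) / 3 \<le> 4 * (1 - kerr_cdf x)"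
    using cubic_le_kerr_profile[of "- cos x"] unfolding one_minus_kerr_cdf by simp
qed

definition entropy_gap :: "real \<Rightarrow> real \<Rightarrow> real" where
  "entropy_gap y z = (y - z) + y * ln z - y * ln y + (1 - y) * ln (1 - y) - (1 - y) * ln (1 - z)"

lemma entropy_gap_has_real_derivative:
  assumes "(Y has_real_derivative Y') (at t)" and "(Z has_real_derivative Z') (at t)"
    and "0 < Y t" "Y t < 1" "0 < Z t" "Z t < 1"
  shows "((\<lambda>t. entropy_gap (Y t) (Z t)) has_real_derivative
      (Y t / Z t + (1 - Y t) / (1 - Z t) - 1) * Z'
      - (1 + ln (Y t) + ln (1 - Y t) - ln (Z t) - ln (1 - Z t)) * Y') (at t)"
proof -
  have "0 < 1 - Y t" "0 < 1 - Z t"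
    using assms(4,6) by simp_all
  show ?thesis
    unfolding entropy_gap_def
    apply (rule derivative_eq_intros refl assms \<open>0 < 1 - Y t\<close> \<open>0 < 1 - Z t\<close>)+
    using assms(3-6) apply simp_all
    apply (simp add: field_simps)
    done
qed

lemma continuous_on_entropy_gap:
  fixes Y Z :: "'a::t2_space \<Rightarrow> real"
  assumes "continuous_on S Y" and "continuous_on S Z"
    and "\<And>t. t \<in> S \<Longrightarrow> 0 \<le> Y t \<and> Y t \<le> C * Z t"
    and "\<And>t. t \<in> S \<Longrightarrow> 0 \<le> 1 - Y t \<and> 1 - Y t \<le> C * (1 - Z t)"
    and "\<And>t. t \<in> S \<Longrightarrow> 0 \<le> Z t \<and> Z t \<le> 1"
  shows "continuous_on S (\<lambda>t. entropy_gap (Y t) (Z t))"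
proof -
  have Y': "continuous_on S (\<lambda>t. 1 - Y t)" and Z': "continuous_on S (\<lambda>t. 1 - Z t)"
    using assms(1,2) by (auto intro: continuous_intros)
  have YZ: "continuous_on S (\<lambda>t. Y t - Z t)"
    using assms(1,2) by (rule continuous_on_diff)
  have "continuous_on S (\<lambda>t. Y t * ln (Z t))"
    by (rule continuous_on_mult_ln_dominated[OF assms(1,2), where C = C]) (use assms in auto)
  moreover have "continuous_on S (\<lambda>t. Y t * ln (Y t))"
    by (rule continuous_on_mult_ln_dominated[OF assms(1,1), where C = 1]) (use assms in auto)
  moreover have "continuous_on S (\<lambda>t. (1 - Y t) * ln (1 - Y t))"
    by (rule continuous_on_mult_ln_dominated[OF Y' Y', where C = 1]) (use assms in auto)
  moreover have "continuous_on S (\<lambda>t. (1 - Y t) * ln (1 - Z t))"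
    by (rule continuous_on_mult_ln_dominated[OF Y' Z', where C = C]) (use assms in auto)
  ultimately show ?thesis
    unfolding entropy_gap_def using YZ assms(1,2) by (intro continuous_on_diff continuous_on_add)
qed

lemma entropy_gap_0_0 [simp]: "entropy_gap 0 0 = 0"
  and entropy_gap_1_1 [simp]: "entropy_gap 1 1 = 0"
  by (simp_all add: entropy_gap_def)

definition calibration_offset :: "real \<Rightarrow> real" where
  "calibration_offset t = ((cos t)^2 + 2 * ln (1 + (cos t)^2)) * kerr_density t"

lemma has_integral_calibration_offset: "(calibration_offset has_integral (2 * ln 2 - 1)) {0..pi}"
proof -
  define K where "K t = cos t - cos t / (1 + (cos t)^2) - 2 * cos t * ln (1 + (cos t)^2) / (1 + (cos t)^2)"
    for t :: real
  have K': "(K has_real_derivative calibration_offset t) (at t)" for t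
  proof -
    obtain d where d: "1 + (cos t)^2 = d" by simp
    have "0 < d"
      using one_add_power2_pos[of "cos t"] d by simp
    show ?thesis
      unfolding K_def[abs_def] calibration_offset_def kerr_density_def
      apply (rule derivative_eq_intros refl one_add_power2_pos
          one_add_power2_neq_0)+
      apply (simp_all only: d)
      using \<open>0 < d\<close> apply simp_all
      apply (simp add: field_simps)
      using sin_cos_squared_add[of t] d by algebra
  qed
  have "(calibration_offset has_integral (K pi - K 0)) {0..pi}"
  proof (rule fundamental_theorem_of_calculus)
    fix x
    show "(K has_vector_derivative calibration_offset x) (at x within {0..pi})"
      using K' by (simp add: has_real_derivative_iff_has_vector_derivative[symmetric]
          has_field_derivative_at_within)
  qed simp
  moreover have "K pi - K 0 = 2 * ln 2 - 1"
    by (simp add: K_def)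
  ultimately show ?thesis
    by simp
qed

lemma has_real_derivative_cos_sin_square_div:
  "((\<lambda>t. cos t * sin t ^ 2 / (1 + (cos t)^2)) has_real_derivative sin t - 2 * kerr_density t) (at t)"
proof -
  obtain d where d: "1 + (cos t)^2 = d" by simp
  have "d \<noteq> 0"
    using one_add_power2_pos[of "cos t"] d by simp
  show ?thesis
    unfolding kerr_density_def
    apply (rule derivative_eq_intros refl)+
    apply (simp_all only: d)
    using \<open>d \<noteq> 0\<close> apply simp
    apply (simp add: field_simps \<open>d \<noteq> 0\<close>)
    using sin_cos_squared_add[of t] d by algebra
qed

text \<open>The derivative of the calibration, expressed through the angle \<open>t\<close>, the values \<open>\<sigma>, \<sigma>'\<close>
  of \<open>s, s'\<close>, and the normalised cumulative weight \<open>y\<close> and weight density \<open>p\<close> at \<open>t\<close>.\<close>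
definition calibration_rate :: "real \<Rightarrow> real \<Rightarrow> real \<Rightarrow> real \<Rightarrow> real \<Rightarrow> real" where
  "calibration_rate t \<sigma> \<sigma>' y p =
     (2 * \<sigma>' - 4 * cos t * sin t / (1 + (cos t)^2)) * (y - kerr_cdf t)
     + 2 * (\<sigma> + ln (1 + (cos t)^2)) * (p - kerr_density t)
     + (y / kerr_cdf t + (1 - y) / (1 - kerr_cdf t) - 1) * kerr_density t
     - (1 + ln y + ln (1 - y) - ln (kerr_cdf t) - ln (1 - kerr_cdf t)) * p
     - \<sigma>' * (cos t * sin t ^ 2 / (1 + (cos t)^2))
     - \<sigma> * (sin t - 2 * kerr_density t)"

lemma ratio_sum_minus_one:
  fixes y z :: real
  assumes "0 < z" "z < 1"
  shows "y / z + (1 - y) / (1 - z) - 1 = (y - z)^2 / (z * (1 - z)) + y * (1 - y) / (z * (1 - z))"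
  using assms by (simp add: divide_simps) algebra

text \<open>After completing a square in \<open>\<sigma>'\<close>, what remains is Gibbs' inequality comparing \<open>p\<close>
  with a multiple of the Kerr density.\<close>
lemma calibration_rate_lower_bound:
  fixes t \<sigma> \<sigma>' y A :: real
  assumes t: "t \<in> {0<..<pi}" and y: "0 < y" "y < 1" and A: "0 < A"
  defines "p \<equiv> exp (2 * \<sigma>) * sin t ^ 3 / A"
  shows "4 * ln A * p
    \<le> \<sigma>'^2 * sin t + 4 * \<sigma> * sin t + 4 * calibration_offset t + 4 * calibration_rate t \<sigma> \<sigma>' y p"
proof -
  define z where "z = kerr_cdf t"
  define q where "q = kerr_density t"
  define u where "u = 2 * (\<sigma> + ln (1 + (cos t)^2))"
  define u' where "u' = 2 * \<sigma>' - 4 * cos t * sin t / (1 + (cos t)^2)"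
  define lam where "lam = y * (1 - y) / (z * (1 - z))"
  define f where "f = (y - z)^2 / (z * (1 - z))"
  have sin: "0 < sin t"
    using t by (auto intro: sin_gt_zero)
  have D: "0 < 1 + (cos t)^2"
    by (rule one_add_power2_pos)
  have z: "0 < z" "z < 1"
    unfolding z_def using kerr_cdf_strict_bounds[OF t] by auto
  have q: "0 < q"
    unfolding q_def kerr_density_def using sin D by simp
  have p: "0 < p"
    unfolding p_def using sin A by simp
  have lam: "0 < lam"
    unfolding lam_def using y z by simp
  have rate: "calibration_rate t \<sigma> \<sigma>' y p = u' * (y - z) + u * (p - q) + (f + lam) * q
      - (1 + ln lam) * p - \<sigma>' * (cos t * sin t ^ 2 / (1 + (cos t)^2)) - \<sigma> * (sin t - 2 * q)"
  proof -
    have ln_lam: "1 + ln y + ln (1 - y) - ln z - ln (1 - z) = 1 + ln lam"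
      unfolding lam_def using y z by (simp add: ln_mult ln_div)
    show ?thesis
      unfolding calibration_rate_def z_def[symmetric] q_def[symmetric] ratio_sum_minus_one[OF z]
        ln_lam f_def[symmetric] lam_def[symmetric] u_def[symmetric] u'_def[symmetric] ..
  qed
  have offset: "calibration_offset t = u'^2 * sin t / 16 + u * q - \<sigma>'^2 * sin t / 4 - \<sigma> * sin t
      + \<sigma>' * (cos t * sin t ^ 2 / (1 + (cos t)^2)) + \<sigma> * (sin t - 2 * q)"
  proof -
    obtain d where d: "1 + (cos t)^2 = d" by simp
    with D have "d \<noteq> 0" by simp
    then show ?thesis
      unfolding calibration_offset_def q_def kerr_density_def u_def u'_def d
      by (simp add: field_simps power2_eq_square power3_eq_cube)
  qed
  have ln_A: "ln A = u - ln p + ln q"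
  proof -
    have "p = q * (exp (2 * \<sigma>) * (1 + (cos t)^2)^2 / A)"
      unfolding p_def q_def kerr_density_def using D by (simp add: field_simps)
    then have "ln p = ln q + 2 * \<sigma> + 2 * ln (1 + (cos t)^2) - ln A"
      using q A D by (simp add: ln_mult ln_div ln_realpow)
    then show ?thesis
      unfolding u_def by simp
  qed
  have square: "0 \<le> u'^2 * sin t / 16 + u' * (y - z) + f * q"
  proof -
    have "f * q = (y - z)^2 * (q / (z * (1 - z)))"
      unfolding f_def by simp
    also have "\<dots> = 4 * (y - z)^2 / sin t"
      unfolding q_def z_def kerr_density_div_cdf_variance[OF less_imp_neq[OF sin, symmetric]] by simp
    finally have "f * q = 4 * (y - z)^2 / sin t" .
    moreover have "u'^2 * sin t / 16 + u' * (y - z) + 4 * (y - z)^2 / sin t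
        = (u' * sin t / 4 + 2 * (y - z))^2 / sin t"
      using sin by (simp add: field_simps power2_eq_square)
    ultimately show ?thesis
      using sin by simp
  qed
  have gibbs: "0 \<le> lam * q - p - p * (ln lam + ln q - ln p)"
  proof -
    have "ln (lam * q / p) = ln lam + ln q - ln p"
      using lam q p by (simp add: ln_mult ln_div)
    then show ?thesis
      using mult_ln_div_le[OF p mult_pos_pos[OF lam q]] by simp
  qed
  have "\<sigma>'^2 * sin t + 4 * \<sigma> * sin t + 4 * calibration_offset t + 4 * calibration_rate t \<sigma> \<sigma>' y p
      - 4 * ln A * p
      = 4 * ((u'^2 * sin t / 16 + u' * (y - z) + f * q) + (lam * q - p - p * (ln lam + ln q - ln p)))"
    unfolding rate offset ln_A by algebra
  also have "\<dots> \<ge> 0"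
    by (intro mult_nonneg_nonneg add_nonneg_nonneg square gibbs) simp
  finally show ?thesis
    by simp
qed

locale axisym_profile =
  fixes s s' :: "real \<Rightarrow> real"
  assumes continuous_s: "continuous_on {0..pi} s"
    and continuous_s': "continuous_on {0..pi} s'"
    and s_has_real_derivative: "\<And>x. x \<in> {0<..<pi} \<Longrightarrow> (s has_real_derivative s' x) (at x)"
begin

definition weight :: "real \<Rightarrow> real" where
  "weight t = exp (2 * s t) * sin t ^ 3"

definition total_weight :: real where
  "total_weight = integral {0..pi} weight"

definition weight_cdf :: "real \<Rightarrow> real" where
  "weight_cdf x = integral {0..x} weight / total_weight"

lemma continuous_on_weight: "continuous_on {0..pi} weight"
  unfolding weight_def[abs_def] using continuous_s by (intro continuous_intros)

lemma weight_integrable: "0 \<le> a \<Longrightarrow> b \<le> pi \<Longrightarrow> weight integrable_on {a..b}"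
  by (rule integrable_continuous_interval, rule continuous_on_subset[OF continuous_on_weight]) auto

lemma has_integral_weight: "(weight has_integral total_weight) {0..pi}"
  unfolding total_weight_def by (rule integrable_integral, rule weight_integrable) simp_all

lemma weight_eq_0_imp:
  assumes "t \<in> {0..pi}" and "weight t = 0"
  shows "t = 0 \<or> t = pi"
proof (rule ccontr)
  assume "\<not> (t = 0 \<or> t = pi)"
  with assms(1) have "0 < t" "t < pi"
    by auto
  then have "0 < weight t"
    by (simp add: weight_def sin_gt_zero)
  with assms(2) show False
    by simp
qed

lemma weight_nonneg: "t \<in> {0..pi} \<Longrightarrow> 0 \<le> weight t"
  by (simp add: weight_def sin_ge_zero)

lemma integral_weight_comparable:
  obtains m M where "0 < m" "0 < M"
    "\<And>a b. 0 \<le> a \<Longrightarrow> a \<le> b \<Longrightarrow> b \<le> pi \<Longrightarrow>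
       m * integral {a..b} (\<lambda>t. sin t ^ 3) \<le> integral {a..b} weight \<and>
       integral {a..b} weight \<le> M * integral {a..b} (\<lambda>t. sin t ^ 3)"
proof -
  obtain t\<^sub>0 where "\<forall>t\<in>{0..pi}. s t\<^sub>0 \<le> s t"
    using continuous_attains_inf[OF compact_Icc _ continuous_s] by auto
  moreover obtain t\<^sub>1 where "\<forall>t\<in>{0..pi}. s t \<le> s t\<^sub>1"
    using continuous_attains_sup[OF compact_Icc _ continuous_s] by auto
  ultimately have bounds: "exp (2 * s t\<^sub>0) * sin t ^ 3 \<le> weight t \<and> weight t \<le> exp (2 * s t\<^sub>1) * sin t ^ 3"
    if "t \<in> {0..pi}" for t
    using that sin_ge_zero[of t] unfolding weight_def by (auto intro!: mult_right_mono)
  show ?thesis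
  proof
    fix a b :: real
    assume "0 \<le> a" "a \<le> b" "b \<le> pi"
    then have sub: "{a..b} \<subseteq> {0..pi}" and int: "weight integrable_on {a..b}"
      using weight_integrable by auto
    have int_sin: "(\<lambda>t. c * sin t ^ 3) integrable_on {a..b}" for c
      by (intro integrable_continuous_interval continuous_intros)
    have "integral {a..b} (\<lambda>t. exp (2 * s t\<^sub>0) * sin t ^ 3) \<le> integral {a..b} weight"
      by (rule integral_le[OF int_sin int]) (use bounds sub in blast)
    moreover have "integral {a..b} weight \<le> integral {a..b} (\<lambda>t. exp (2 * s t\<^sub>1) * sin t ^ 3)"
      by (rule integral_le[OF int int_sin]) (use bounds sub in blast)
    ultimately show "exp (2 * s t\<^sub>0) * integral {a..b} (\<lambda>t. sin t ^ 3) \<le> integral {a..b} weight \<and>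
       integral {a..b} weight \<le> exp (2 * s t\<^sub>1) * integral {a..b} (\<lambda>t. sin t ^ 3)"
      by simp
  qed simp_all
qed

lemma total_weight_pos: "0 < total_weight"
proof -
  obtain m where "0 < m" "m * integral {0..pi} (\<lambda>t. sin t ^ 3) \<le> total_weight"
    using integral_weight_comparable[of thesis] unfolding total_weight_def by force
  moreover have "integral {0..pi} (\<lambda>t. sin t ^ 3) = 4 / 3"
    by (simp add: integral_sin_cube_from_0)
  ultimately show ?thesis
    by simp
qed

lemma weight_cdf_0 [simp]: "weight_cdf 0 = 0"
  and weight_cdf_pi [simp]: "weight_cdf pi = 1"
  using total_weight_pos by (simp_all add: weight_cdf_def total_weight_def)

lemma one_minus_weight_cdf:
  assumes "x \<in> {0..pi}"
  shows "1 - weight_cdf x = integral {x..pi} weight / total_weight"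
proof -
  have "integral {0..x} weight + integral {x..pi} weight = total_weight"
    unfolding total_weight_def using assms weight_integrable[of 0 pi]
    by (simp add: Henstock_Kurzweil_Integration.integral_combine)
  then show ?thesis
    unfolding weight_cdf_def using total_weight_pos by (simp add: field_simps)
qed

lemma weight_cdf_dominated:
  obtains C where
    "\<And>x. x \<in> {0..pi} \<Longrightarrow> 0 \<le> weight_cdf x \<and> weight_cdf x \<le> C * kerr_cdf x"
    "\<And>x. x \<in> {0..pi} \<Longrightarrow> 0 \<le> 1 - weight_cdf x \<and> 1 - weight_cdf x \<le> C * (1 - kerr_cdf x)"
proof -
  obtain m M where "0 < m" "0 < M" and comparable:
    "\<And>a b. 0 \<le> a \<Longrightarrow> a \<le> b \<Longrightarrow> b \<le> pi \<Longrightarrow>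
       m * integral {a..b} (\<lambda>t. sin t ^ 3) \<le> integral {a..b} weight \<and>
       integral {a..b} weight \<le> M * integral {a..b} (\<lambda>t. sin t ^ 3)"
    using integral_weight_comparable by blast
  define C where "C = 4 * M / total_weight"
  show ?thesis
  proof
    fix x :: real
    assume x: "x \<in> {0..pi}"
    have "0 \<le> 2 + cos x" "0 \<le> 2 - cos x"
      using cos_ge_minus_one[of x] cos_le_one[of x] by linarith+
    then have cap_0: "0 \<le> integral {0..x} (\<lambda>t. sin t ^ 3)"
      and cap_pi: "0 \<le> integral {x..pi} (\<lambda>t. sin t ^ 3)"
      using x by (simp_all add: integral_sin_cube_from_0 integral_sin_cube_to_pi)
    have "0 \<le> integral {0..x} weight"
      using comparable[of 0 x] x cap_0 \<open>0 < m\<close> by (smt (verit) mult_nonneg_nonneg atLeastAtMost_iff)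
    moreover have "integral {0..x} weight \<le> M * integral {0..x} (\<lambda>t. sin t ^ 3)"
      using comparable[of 0 x] x by simp
    moreover have "M * integral {0..x} (\<lambda>t. sin t ^ 3) \<le> M * (4 * kerr_cdf x)"
      using x \<open>0 < M\<close> sin_cube_cap_le_kerr_cdf(1)[of x]
      by (intro mult_left_mono) (simp_all add: integral_sin_cube_from_0)
    ultimately show "0 \<le> weight_cdf x \<and> weight_cdf x \<le> C * kerr_cdf x"
      unfolding weight_cdf_def C_def using total_weight_pos by (simp add: field_simps)
    have "0 \<le> integral {x..pi} weight"
      using comparable[of x pi] x cap_pi \<open>0 < m\<close> by (smt (verit) mult_nonneg_nonneg atLeastAtMost_iff)
    moreover have "integral {x..pi} weight \<le> M * integral {x..pi} (\<lambda>t. sin t ^ 3)"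
      using comparable[of x pi] x by simp
    moreover have "M * integral {x..pi} (\<lambda>t. sin t ^ 3) \<le> M * (4 * (1 - kerr_cdf x))"
      using x \<open>0 < M\<close> sin_cube_cap_le_kerr_cdf(2)[of x]
      by (intro mult_left_mono) (simp_all add: integral_sin_cube_to_pi)
    ultimately show "0 \<le> 1 - weight_cdf x \<and> 1 - weight_cdf x \<le> C * (1 - kerr_cdf x)"
      unfolding one_minus_weight_cdf[OF x] C_def using total_weight_pos by (simp add: field_simps)
  qed
qed

lemma weight_cdf_strict_bounds:
  assumes x: "x \<in> {0<..<pi}"
  shows "0 < weight_cdf x" "weight_cdf x < 1"
proof -
  obtain m where "0 < m" and lower:
    "\<And>a b. 0 \<le> a \<Longrightarrow> a \<le> b \<Longrightarrow> b \<le> pi \<Longrightarrow>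
       m * integral {a..b} (\<lambda>t. sin t ^ 3) \<le> integral {a..b} weight"
    using integral_weight_comparable by metis
  have "-1 < cos x" "cos x < 1"
    using x cos_monotone_0_pi[of 0 x] cos_monotone_0_pi[of x pi] by auto
  then have "0 < integral {0..x} (\<lambda>t. sin t ^ 3)" "0 < integral {x..pi} (\<lambda>t. sin t ^ 3)"
    using x by (simp_all add: integral_sin_cube_from_0 integral_sin_cube_to_pi)
  then have "0 < integral {0..x} weight" "0 < integral {x..pi} weight"
    using lower[of 0 x] lower[of x pi] x mult_pos_pos[OF \<open>0 < m\<close>] by force+
  then show "0 < weight_cdf x"
    using total_weight_pos by (simp add: weight_cdf_def)
  have "0 < 1 - weight_cdf x"
    using \<open>0 < integral {x..pi} weight\<close> x total_weight_pos by (simp add: one_minus_weight_cdf)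
  then show "weight_cdf x < 1"
    by simp
qed

lemma weight_cdf_has_real_derivative:
  assumes "x \<in> {0<..<pi}"
  shows "(weight_cdf has_real_derivative weight x / total_weight) (at x)"
proof -
  have "((\<lambda>x. integral {0..x} weight) has_real_derivative weight x) (at x within {0..pi})"
    using assms by (intro integral_has_real_derivative continuous_on_weight) auto
  then have "((\<lambda>x. integral {0..x} weight) has_real_derivative weight x) (at x)"
    using assms at_within_interior[of x "{0..pi}"] by auto
  then show ?thesis
    unfolding weight_cdf_def[abs_def] using total_weight_pos by (auto intro!: derivative_eq_intros)
qed

lemma continuous_on_weight_cdf: "continuous_on {0..pi} weight_cdf"
proof -
  have "continuous_on {0..pi} (\<lambda>x. integral {0..x} weight)"
    by (rule indefinite_integral_continuous_1, rule weight_integrable) simp_all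
  then show ?thesis
    unfolding weight_cdf_def[abs_def] using total_weight_pos
    by (intro continuous_on_divide continuous_on_const) auto
qed

definition calibration :: "real \<Rightarrow> real" where
  "calibration t = 2 * (s t + ln (1 + (cos t)^2)) * (weight_cdf t - kerr_cdf t)
     + entropy_gap (weight_cdf t) (kerr_cdf t) - s t * (cos t * sin t ^ 2 / (1 + (cos t)^2))"

lemma calibration_0 [simp]: "calibration 0 = 0"
  and calibration_pi [simp]: "calibration pi = 0"
  by (simp_all add: calibration_def)

lemma calibration_has_real_derivative:
  assumes x: "x \<in> {0<..<pi}"
  shows "(calibration has_real_derivative
      calibration_rate x (s x) (s' x) (weight_cdf x) (weight x / total_weight)) (at x)"
proof -
  note cdf = weight_cdf_has_real_derivative[OF x]
  note kerr = kerr_cdf_has_real_derivative[of x]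
  note gap = entropy_gap_has_real_derivative[OF cdf kerr weight_cdf_strict_bounds[OF x]
      kerr_cdf_strict_bounds[OF x]]
  have ln: "((\<lambda>t. ln (1 + (cos t)^2)) has_real_derivative - 2 * cos x * sin x / (1 + (cos x)^2)) (at x)"
    by (rule derivative_eq_intros refl one_add_power2_pos)+ (simp add: field_simps)
  show ?thesis
    unfolding calibration_def[abs_def] calibration_rate_def
    apply (rule ln has_real_derivative_cos_sin_square_div gap cdf kerr s_has_real_derivative[OF x]
        derivative_eq_intros refl)+
    by (simp add: algebra_simps add_divide_distrib)
qed

lemma continuous_on_calibration: "continuous_on {0..pi} calibration"
proof -
  obtain C where
    "\<And>x. x \<in> {0..pi} \<Longrightarrow> 0 \<le> weight_cdf x \<and> weight_cdf x \<le> C * kerr_cdf x"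
    "\<And>x. x \<in> {0..pi} \<Longrightarrow> 0 \<le> 1 - weight_cdf x \<and> 1 - weight_cdf x \<le> C * (1 - kerr_cdf x)"
    using weight_cdf_dominated by blast
  moreover have kerr: "continuous_on {0..pi} kerr_cdf"
    using kerr_cdf_has_real_derivative by (intro continuous_at_imp_continuous_on ballI DERIV_isCont)
  ultimately have "continuous_on {0..pi} (\<lambda>t. entropy_gap (weight_cdf t) (kerr_cdf t))"
    using kerr_cdf_nonneg kerr_cdf_le_1
    by (intro continuous_on_entropy_gap[OF continuous_on_weight_cdf kerr, where C = C]) auto
  then show ?thesis
    unfolding calibration_def[abs_def] using continuous_s continuous_on_weight_cdf kerr
    by (intro continuous_intros) (auto simp: one_add_power2_pos one_add_power2_neq_0)
qed

lemma calibration_rate_has_integral: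
  "((\<lambda>t. calibration_rate t (s t) (s' t) (weight_cdf t) (weight t / total_weight)) has_integral 0)
    {0..pi}"
  using fundamental_theorem_of_calculus_interior[of 0 pi calibration] continuous_on_calibration
    calibration_has_real_derivative
  by (simp add: has_real_derivative_iff_has_vector_derivative)

theorem ln_total_weight_le:
  "4 * ln total_weight - 8 * ln 2 + 4 \<le> integral {0..pi} (\<lambda>t. (s' t ^ 2 + 4 * s t) * sin t)"
proof -
  define R where "R t = calibration_rate t (s t) (s' t) (weight_cdf t) (weight t / total_weight)" for t
  define E where "E = integral {0..pi} (\<lambda>t. (s' t ^ 2 + 4 * s t) * sin t)"
  have "(\<lambda>t. (s' t ^ 2 + 4 * s t) * sin t) integrable_on {0..pi}"
    using continuous_s continuous_s' by (intro integrable_continuous_interval continuous_intros)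
  then have upper: "((\<lambda>t. (s' t ^ 2 + 4 * s t) * sin t + 4 * calibration_offset t + 4 * R t)
      has_integral (E + 4 * (2 * ln 2 - 1) + 4 * 0)) {0..pi}"
    unfolding E_def R_def
    by (intro has_integral_add has_integral_mult_right integrable_integral
        has_integral_calibration_offset calibration_rate_has_integral)
  have lower: "((\<lambda>t. 4 * ln total_weight * (weight t / total_weight))
      has_integral (4 * ln total_weight * (total_weight / total_weight))) {0..pi}"
    by (intro has_integral_mult_right has_integral_divide has_integral_weight)
  have pointwise: "4 * ln total_weight * (weight t / total_weight)
      \<le> (s' t ^ 2 + 4 * s t) * sin t + 4 * calibration_offset t + 4 * R t" if "t \<in> {0<..<pi}" for t
    using calibration_rate_lower_bound[OF that weight_cdf_strict_bounds[OF that] total_weight_pos,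
        of "s t" "s' t"]
    unfolding R_def weight_def by (simp add: algebra_simps)
  have "4 * ln total_weight * (total_weight / total_weight) \<le> E + 4 * (2 * ln 2 - 1) + 4 * 0"
    using lower upper pointwise unfolding has_integral_Icc_iff_Ioo by (rule has_integral_le)
  then show ?thesis
    unfolding E_def using total_weight_pos by simp
qed

end

lemma integral_square_div_ge:
  fixes f e :: "'a::euclidean_space \<Rightarrow> real"
  assumes f: "(f has_integral D) S" and e: "(e has_integral A) S" and "0 < A"
    and int: "(\<lambda>x. f x ^ 2 / e x) integrable_on S"
    and e_nonneg: "\<And>x. x \<in> S \<Longrightarrow> 0 \<le> e x"
    and e_zero: "\<And>x. x \<in> S \<Longrightarrow> e x = 0 \<Longrightarrow> f x = 0"
  shows "D^2 / A \<le> integral S (\<lambda>x. f x ^ 2 / e x)"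
proof -
  define k where "k = D / A"
  have "((\<lambda>x. 2 * k * f x - k^2 * e x) has_integral (2 * k * D - k^2 * A)) S"
    by (intro has_integral_diff has_integral_mult_right f e)
  moreover have "2 * k * f x - k^2 * e x \<le> f x ^ 2 / e x" if "x \<in> S" for x
  proof (cases "e x = 0")
    case False
    with e_nonneg[OF that] have "0 < e x" by simp
    have "f x ^ 2 / e x - (2 * k * f x - k^2 * e x) = (f x - k * e x)^2 / e x"
      using \<open>0 < e x\<close> by (simp add: field_simps power2_eq_square)
    also have "\<dots> \<ge> 0"
      using \<open>0 < e x\<close> by simp
    finally show ?thesis
      by simp
  qed (use e_zero[OF that] in simp)
  ultimately have "2 * k * D - k^2 * A \<le> integral S (\<lambda>x. f x ^ 2 / e x)"
    using int by (intro has_integral_le[OF _ integrable_integral]) auto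
  also have "2 * k * D - k^2 * A = D^2 / A"
    unfolding k_def using \<open>0 < A\<close> by (simp add: field_simps power2_eq_square)
  finally show ?thesis .
qed

text \<open>The minimum of \<open>4 ln A + D\<^sup>2 / A\<close> over \<open>A > 0\<close> is attained at \<open>A = D\<^sup>2 / 4\<close>.\<close>
lemma ln_plus_square_div_ge:
  fixes A D :: real
  assumes "0 < A" and "D \<noteq> 0"
  shows "8 * (ln (2 * \<bar>D / 8\<bar>) + 1) \<le> 4 * ln A - 8 * ln 2 + 4 + D^2 / A"
proof -
  define a where "a = \<bar>D\<bar> / 2"
  have "0 < a"
    unfolding a_def using assms by simp
  have arg: "2 * \<bar>D / 8\<bar> = a / 2" and ratio: "D^2 / A = 4 * (a^2 / A)"
    unfolding a_def by (simp_all add: power_divide)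
  have ln_arg: "ln (a / 2) = ln a - ln 2" and ln_ratio: "ln (a^2 / A) = 2 * ln a - ln A"
    using \<open>0 < a\<close> assms by (simp_all add: ln_div ln_realpow)
  have "ln (a^2 / A) \<le> a^2 / A - 1"
    using \<open>0 < a\<close> assms by (intro ln_le_minus_one) simp
  then show ?thesis
    unfolding arg ratio ln_arg ln_ratio by (simp add: algebra_simps)
qed

lemma mass_integrand_eq:
  "mass_integrand s w t
    = ((deriv s t)^2 + 4 * s t) * sin t + (deriv w t)^2 / (exp (2 * s t) * sin t ^ 3)"
proof (cases "sin t = 0")
  case False
  have "(eta_fun s t)^2 = exp (2 * s t) * sin t ^ 3 * sin t"
    unfolding eta_fun_def by (simp add: exp_double power_mult_distrib eval_nat_numeral)
  with False show ?thesis
    unfolding mass_integrand_def by (simp add: distrib_right)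
qed (simp add: mass_integrand_def)

theorem lemma3:
  fixes s w :: "real \<Rightarrow> real"
  assumes "regular_axisym s" and "regular_axisym w"
    and "mass_integrand s w integrable_on {0..pi}"
    and "deriv w 0 = 0" and "deriv w pi = 0"
    and "(w pi - w 0) / 8 \<noteq> 0"
  shows "mass_functional s w \<ge> 8 * (ln (2 * \<bar>(w pi - w 0) / 8\<bar>) + 1)"
proof -
  interpret axisym_profile s "deriv s"
    using assms(1) by unfold_locales (auto intro: continuous_on_regular_axisym
        continuous_on_deriv_regular_axisym regular_axisym_has_real_derivative)
  define E where "E t = ((deriv s t)^2 + 4 * s t) * sin t" for t
  define R where "R t = (deriv w t)^2 / weight t" for t
  have split: "mass_integrand s w = (\<lambda>t. E t + R t)"
    unfolding E_def R_def weight_def by (rule ext) (rule mass_integrand_eq)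
  have "E integrable_on {0..pi}"
    unfolding E_def using assms(1)
    by (intro integrable_continuous_interval continuous_intros continuous_on_regular_axisym
        continuous_on_deriv_regular_axisym)
  moreover have "R integrable_on {0..pi}"
    using integrable_diff[OF assms(3) \<open>E integrable_on {0..pi}\<close>] unfolding split by simp
  ultimately have mass: "mass_functional s w = integral {0..pi} E + integral {0..pi} R"
    unfolding mass_functional_def split by (rule integral_add)
  have "(deriv w has_integral (w pi - w 0)) {0..pi}"
    using regular_axisym_has_real_derivative[OF assms(2)]
    by (intro fundamental_theorem_of_calculus)
      (auto simp: has_real_derivative_iff_has_vector_derivative[symmetric] has_field_derivative_at_within)
  then have rotation: "(w pi - w 0)^2 / total_weight \<le> integral {0..pi} R"
    unfolding R_def using assms(4,5) weight_eq_0_imp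
    by (intro integral_square_div_ge has_integral_weight total_weight_pos weight_nonneg
        \<open>R integrable_on {0..pi}\<close>[unfolded R_def]) auto
  have "8 * (ln (2 * \<bar>(w pi - w 0) / 8\<bar>) + 1)
      \<le> 4 * ln total_weight - 8 * ln 2 + 4 + (w pi - w 0)^2 / total_weight"
    using assms(6) by (intro ln_plus_square_div_ge total_weight_pos) simp
  also have "\<dots> \<le> integral {0..pi} E + integral {0..pi} R"
    using ln_total_weight_le rotation
    unfolding E_def by (rule add_mono)
  finally show ?thesis
    unfolding mass .
qed

end
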